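(* Let $\mathcal N$ be a ground set with $|\mathcal N|=n$, $f:2^{\mathcal N}\to\mathbb R$ monotone submodular, $k\ge1$ an integer, $0<\epsilon<1/2$, and $O$ an optimal solution of size $k$ to $\max\{f(S):|S|\le k\}$. Suppose $\textsc{LowAdapLinearSeq}(f,\mathcal N,k,\epsilon)$ (described in the context) terminates successfully, and let $A$ and $V$ be the final values of the sets $A$ and $V$ maintained by the algorithm. Then $f(O\setminus V)\le2f(A)$.
   Context: $f$ is submodular if $f(T\cup\{x\})-f(T)\le f(S\cup\{x\})-f(S)$ for all $S\subseteq T\subseteq\mathcal N$, $x\notin T$; monotone if $f(S)\le f(T)$ for $S\subseteq T$. $\Delta(x\mid S)=f(S\cup\{x\})-f(S)$, $\Delta(T\mid S)=f(S\cup T)-f(S)$. $\log$ is natural log. Algorithm $\textsc{LowAdapLinearSeq}(f,\mathcal N,k,\epsilon)$: Let $a=\arg\max_{u\in\mathcal N}f(\{u\})$; $A\leftarrow\{a\}$, $V\leftarrow\mathcal N$, $\beta=\epsilon/(16\log(8/(1-e^{-\epsilon/2})))$, $\ell=\lceil4(1+1/(\beta\epsilon))\log(n/k)\rceil$. For $j=1,\dots,\ell$: (i) $V\leftarrow\{x\in V:\Delta(x\mid A)\ge f(A)/k\}$; (ii) if $|V|\le k$, break; (iii) let $(v_1,\dots,v_{|V|})$ be a uniformly random permutation of $V$; (iv) $\Lambda=\{\lfloor(1+\epsilon)^u\rfloor:1\le\lfloor(1+\epsilon)^u\rfloor\le k,u\in\mathbb N\}\cup\{\lfloor k+u\epsilon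 k\rfloor:\lfloor k+u\epsilon k\rfloor\le|V|,u\in\mathbb N\}\cup\{|V|\}$ with elements $\lambda_1<\lambda_2<\cdots$, $\lambda_0=0$, $T_\lambda=\{v_1,\dots,v_\lambda\}$, $T'_{\lambda_i}=T_{\lambda_i}\setminus T_{\lambda_{i-1}}$; (v) in parallel set $B[\lambda_i]=\text{true}$ iff $\Delta(T'_{\lambda_i}\mid A\cup T_{\lambda_{i-1}})/|T'_{\lambda_i}|\ge(1-\epsilon)f(A\cup T_{\lambda_{i-1}})/k$; (vi) $\lambda^*$ is the largest $\lambda_i\in\Lambda$ with $B[\lambda_i]=\text{false}$ and either ($\lambda_i\le k$ and $B[\lambda_1],\dots,B[\lambda_{i-1}]$ all true) or ($\lambda_i>k$ and some $m\ge1$ has $|\bigcup_{u=m}^{i-1}T'_{\lambda_u}|\ge k$ and $B[\lambda_m],\dots,B[\lambda_{i-1}]$ all true); (vii) $A\leftarrow A\cup T_{\lambda^*}$. After the loop: if $|V|>k$ return failure; otherwise (successful termination) let $A'$ be the last $k$ elements added to $A$ and return $\arg\max\{f(A'),f(V)\}$. *)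

theory Defs
  imports Complex_Main
begin

definition monotone_sf :: "'a set \<Rightarrow> ('a set \<Rightarrow> real) \<Rightarrow> bool" where
  "monotone_sf N f \<longleftrightarrow> (\<forall>S T. S \<subseteq> T \<and> T \<subseteq> N \<longrightarrow> f S \<le> f T)"

definition submodular :: "'a set \<Rightarrow> ('a set \<Rightarrow> real) \<Rightarrow> bool" where
  "submodular N f \<longleftrightarrow> (\<forall>S T x. S \<subseteq> T \<and> T \<subseteq> N \<and> x \<in> N \<and> x \<notin> T \<longrightarrow>
      f (T \<union> {x}) - f T \<le> f (S \<union> {x}) - f S)"

definition marg :: "('a set \<Rightarrow> real) \<Rightarrow> 'a \<Rightarrow> 'a set \<Rightarrow> real" where
  "marg f x S = f (S \<union> {x}) - f S"

definition margset :: "('a set \<Rightarrow> real) \<Rightarrow> 'a set \<Rightarrow> 'a set \<Rightarrow> real" where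
  "margset f T S = f (S \<union> T) - f S"

definition beta_par :: "real \<Rightarrow> real" where
  "beta_par eps = eps / (16 * ln (8 / (1 - exp (- eps / 2))))"

definition ell_par :: "nat \<Rightarrow> nat \<Rightarrow> real \<Rightarrow> nat" where
  "ell_par n k eps = nat \<lceil>4 * (1 + 1 / (beta_par eps * eps)) * ln (real n / real k)\<rceil>"

definition Lam :: "nat \<Rightarrow> real \<Rightarrow> nat \<Rightarrow> nat set" where
  "Lam k eps m =
     {l. \<exists>u::nat. l = nat \<lfloor>(1 + eps) ^ u\<rfloor> \<and> 1 \<le> \<lfloor>(1 + eps) ^ u\<rfloor> \<and> \<lfloor>(1 + eps) ^ u\<rfloor> \<le> int k}
   \<union> {l. \<exists>u::nat. l = nat \<lfloor>real k + real u * eps * real k\<rfloor> \<and> \<lfloor>real k + real u * eps * real k\<rfloor> \<le> int m}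
   \<union> {m}"

definition prevL :: "nat set \<Rightarrow> nat \<Rightarrow> nat" where
  "prevL L l = Max ({0} \<union> {\<mu> \<in> L. \<mu> < l})"

text \<open>T_lambda = {v_1,...,v_lambda} for the permutation given as a list vs.\<close>
definition Tpre :: "'a list \<Rightarrow> nat \<Rightarrow> 'a set" where
  "Tpre vs l = set (take l vs)"

definition Tblk :: "nat set \<Rightarrow> 'a list \<Rightarrow> nat \<Rightarrow> 'a set" where
  "Tblk L vs l = Tpre vs l - Tpre vs (prevL L l)"

definition Bval :: "('a set \<Rightarrow> real) \<Rightarrow> nat \<Rightarrow> real \<Rightarrow> 'a set \<Rightarrow> nat set \<Rightarrow> 'a list \<Rightarrow> nat \<Rightarrow> bool" where
  "Bval f k eps A L vs l \<longleftrightarrow>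
     margset f (Tblk L vs l) (A \<union> Tpre vs (prevL L l)) / real (card (Tblk L vs l))
       \<ge> (1 - eps) * f (A \<union> Tpre vs (prevL L l)) / real k"

definition lstar_cand :: "('a set \<Rightarrow> real) \<Rightarrow> nat \<Rightarrow> real \<Rightarrow> 'a set \<Rightarrow> nat set \<Rightarrow> 'a list \<Rightarrow> nat \<Rightarrow> bool" where
  "lstar_cand f k eps A L vs l \<longleftrightarrow>
     l \<in> L \<and> \<not> Bval f k eps A L vs l \<and>
     ((l \<le> k \<and> (\<forall>\<mu>\<in>L. \<mu> < l \<longrightarrow> Bval f k eps A L vs \<mu>)) \<or>
      (l > k \<and> (\<exists>m\<in>L. m < l \<and>
          card (\<Union>{Tblk L vs \<mu> | \<mu>. \<mu> \<in> L \<and> m \<le> \<mu> \<and> \<mu> < l}) \<ge> k \<and>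
          (\<forall>\<mu>\<in>L. m \<le> \<mu> \<and> \<mu> < l \<longrightarrow> Bval f k eps A L vs \<mu>))))"

definition is_lstar :: "('a set \<Rightarrow> real) \<Rightarrow> nat \<Rightarrow> real \<Rightarrow> 'a set \<Rightarrow> nat set \<Rightarrow> 'a list \<Rightarrow> nat \<Rightarrow> bool" where
  "is_lstar f k eps A L vs l \<longleftrightarrow>
     lstar_cand f k eps A L vs l \<and> (\<forall>l'. lstar_cand f k eps A L vs l' \<longrightarrow> l' \<le> l)"

definition filt :: "('a set \<Rightarrow> real) \<Rightarrow> nat \<Rightarrow> 'a set \<Rightarrow> 'a set \<Rightarrow> 'a set" where
  "filt f k A V = {x \<in> V. marg f x A \<ge> f A / real k}"

text \<open>reach f N k eps j A V: some execution (some choice of maximiser a and of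
  the random permutations) completes j loop iterations without breaking, with state (A,V).\<close>
inductive reach :: "('a set \<Rightarrow> real) \<Rightarrow> 'a set \<Rightarrow> nat \<Rightarrow> real \<Rightarrow> nat \<Rightarrow> 'a set \<Rightarrow> 'a set \<Rightarrow> bool"
  for f N k eps where
  init: "a \<in> N \<Longrightarrow> (\<forall>u\<in>N. f {u} \<le> f {a}) \<Longrightarrow> reach f N k eps 0 {a} N"
| step: "reach f N k eps j A V \<Longrightarrow> j < ell_par (card N) k eps \<Longrightarrow>
         card (filt f k A V) > k \<Longrightarrow>
         distinct vs \<Longrightarrow> set vs = filt f k A V \<Longrightarrow>
         is_lstar f k eps A (Lam k eps (card (filt f k A V))) vs l \<Longrightarrow>
         reach f N k eps (Suc j) (A \<union> Tpre vs l) (filt f k A V)"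

text \<open>Successful termination with final sets A and V: in some iteration j+1 \<le> ell the
  filtered set has size at most k and the loop breaks.\<close>
definition success_final :: "('a set \<Rightarrow> real) \<Rightarrow> 'a set \<Rightarrow> nat \<Rightarrow> real \<Rightarrow> 'a set \<Rightarrow> 'a set \<Rightarrow> bool" where
  "success_final f N k eps A V \<longleftrightarrow>
     (\<exists>j V0. reach f N k eps j A V0 \<and> j < ell_par (card N) k eps \<and>
             V = filt f k A V0 \<and> card V \<le> k)"

end

theory Submission
  imports Defs
begin

text \<open>An element outside \<open>V \<union> A\<close> was discarded by the filter for some earlier
  \<open>A' \<subseteq> A\<close>; by submodularity and monotonicity its marginal gain with respect to the
  final \<open>A\<close> is still below \<open>f A / k\<close>. As \<open>|O - V| \<le> k\<close>, submodularity gives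
  \<open>f (O - V) \<le> f A + k \<cdot> f A / k\<close>. This needs \<open>f A \<ge> 0\<close>: if \<open>f A < 0\<close>, all
  marginal gains are \<open>\<ge> 0 > f A / k\<close>, so nothing is ever discarded and \<open>V = N\<close>,
  contradicting \<open>|V| \<le> k < n\<close>; here \<open>k < n\<close> because otherwise \<open>\<ell> = 0\<close> and the
  loop could not have run.\<close>

lemma monotone_sfD: "monotone_sf N f \<Longrightarrow> S \<subseteq> T \<Longrightarrow> T \<subseteq> N \<Longrightarrow> f S \<le> f T"
  unfolding monotone_sf_def by blast

lemma submodular_marg_antimono:
  assumes "submodular N f" "S \<subseteq> T" "T \<subseteq> N" "x \<in> N" "x \<notin> T"
  shows "marg f x T \<le> marg f x S"
  using assms unfolding submodular_def marg_def by blast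

lemma marg_eq_0_if_mem: "x \<in> A \<Longrightarrow> marg f x A = 0"
  unfolding marg_def by (simp add: insert_absorb)

lemma marg_nonneg: "monotone_sf N f \<Longrightarrow> A \<subseteq> N \<Longrightarrow> x \<in> N \<Longrightarrow> 0 \<le> marg f x A"
  unfolding marg_def by (auto dest: monotone_sfD[of N f A "A \<union> {x}"])

lemma submodular_union_le_sum_marg:
  assumes sub: "submodular N f" and "finite S" "S \<subseteq> N" "A \<subseteq> N"
  shows "f (A \<union> S) \<le> f A + (\<Sum>x\<in>S. marg f x A)"
  using assms(2,3)
proof (induction S rule: finite_induct)
  case empty
  then show ?case by simp
next
  case (insert x S)
  have "f (A \<union> insert x S) \<le> f (A \<union> S) + marg f x A"
  proof (cases "x \<in> A")
    case True
    then show ?thesis by (simp add: marg_def insert_absorb)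
  next
    case False
    have "marg f x (A \<union> S) \<le> marg f x A"
      using insert False assms(4) by (intro submodular_marg_antimono[OF sub]) auto
    then show ?thesis by (simp add: marg_def)
  qed
  with insert show ?case by simp
qed

lemma le_twice_if_marg_le_threshold:
  assumes "monotone_sf N f" "submodular N f" "finite S" "S \<subseteq> N" "A \<subseteq> N"
    and "card S \<le> k" "0 \<le> f A" "\<forall>x\<in>S. marg f x A \<le> f A / real k"
  shows "f S \<le> 2 * f A"
proof -
  have "f S \<le> f (A \<union> S)"
    using assms(4,5) by (intro monotone_sfD[OF assms(1)]) auto
  also have "\<dots> \<le> f A + (\<Sum>x\<in>S. marg f x A)"
    using submodular_union_le_sum_marg[OF assms(2-5)] .
  also have "\<dots> \<le> f A + real (card S) * (f A / real k)"
    using sum_mono[of S "\<lambda>x. marg f x A" "\<lambda>_. f A / real k"] assms(8) by simp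
  also have "real (card S) * (f A / real k) \<le> f A"
  proof (cases "k = 0")
    case False
    have "real (card S) * f A \<le> real k * f A"
      using assms(6,7) by (simp add: mult_right_mono)
    with False show ?thesis
      by (simp add: field_simps)
  qed (use assms(7) in simp)
  finally show ?thesis by simp
qed

lemma beta_par_pos:
  assumes "0 < eps"
  shows "0 < beta_par eps"
proof -
  have "0 < exp (- eps / 2)" "exp (- eps / 2) < 1"
    using assms by simp_all
  then have "0 < 1 - exp (- eps / 2)" "1 - exp (- eps / 2) < 8"
    by linarith+
  then have "1 < 8 / (1 - exp (- eps / 2))"
    by (simp add: less_divide_eq)
  then show ?thesis
    unfolding beta_par_def using assms by simp
qed

lemma less_if_ell_par_pos:
  assumes "0 < ell_par n k eps" "1 \<le> k" "0 < eps"
  shows "k < n"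
proof (rule ccontr)
  assume "\<not> k < n"
  then have "ln (real n / real k) \<le> 0"
    using assms(2) by (cases "n = 0") (simp_all add: ln_div)
  moreover have "0 < 4 * (1 + 1 / (beta_par eps * eps))"
    using beta_par_pos[OF assms(3)] assms(3) by (simp add: add_pos_pos)
  ultimately have "ell_par n k eps = 0"
    unfolding ell_par_def by (simp add: mult_nonneg_nonpos)
  with assms(1) show False by simp
qed

lemma filt_subset: "filt f k A V \<subseteq> V"
  unfolding filt_def by blast

lemma filt_eq_self_if_negative:
  assumes "monotone_sf N f" "A \<subseteq> N" "V \<subseteq> N" "f A < 0" "1 \<le> k"
  shows "filt f k A V = V"
proof -
  have "f A / real k < 0"
    using assms(4,5) by (simp add: divide_neg_pos)
  then show ?thesis
    using marg_nonneg[OF assms(1,2)] assms(3) unfolding filt_def by fastforce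
qed

definition discarded_below_threshold :: "('a set \<Rightarrow> real) \<Rightarrow> nat \<Rightarrow> 'a set \<Rightarrow> 'a set \<Rightarrow> 'a set \<Rightarrow> bool"
  where "discarded_below_threshold f k N A V \<longleftrightarrow> (\<forall>x \<in> N - V - A. marg f x A < f A / real k)"

lemma discarded_below_threshold_filt:
  "discarded_below_threshold f k N A V \<Longrightarrow> discarded_below_threshold f k N A (filt f k A V)"
  unfolding discarded_below_threshold_def filt_def by auto

lemma discarded_below_threshold_superset:
  assumes mono: "monotone_sf N f" and sub: "submodular N f"
    and "A \<subseteq> A'" "A' \<subseteq> N" "discarded_below_threshold f k N A V"
  shows "discarded_below_threshold f k N A' V"
  unfolding discarded_below_threshold_def
proof
  fix x assume x: "x \<in> N - V - A'"
  have "marg f x A' \<le> marg f x A"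
    using x assms(3,4) by (intro submodular_marg_antimono[OF sub]) auto
  also have "marg f x A < f A / real k"
    using x assms(3,5) unfolding discarded_below_threshold_def by blast
  also have "f A / real k \<le> f A' / real k"
    using monotone_sfD[OF mono assms(3,4)] by (simp add: divide_right_mono)
  finally show "marg f x A' < f A' / real k" .
qed

lemma marg_le_threshold_if_discarded:
  assumes "discarded_below_threshold f k N A V" "0 \<le> f A" "x \<in> N - V"
  shows "marg f x A \<le> f A / real k"
proof (cases "x \<in> A")
  case True
  with assms(2) show ?thesis by (simp add: marg_eq_0_if_mem)
next
  case False
  with assms(1,3) show ?thesis
    unfolding discarded_below_threshold_def by (simp add: less_imp_le)
qed

lemma reach_subset:
  "reach f N k eps j A V \<Longrightarrow> A \<subseteq> N \<and> V \<subseteq> N"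
proof (induction rule: reach.induct)
  case (step j A V vs l)
  have "Tpre vs l \<subseteq> filt f k A V"
    unfolding Tpre_def using set_take_subset step.hyps(5) by metis
  with step.IH filt_subset[of f k A V] show ?case by blast
qed simp

lemma reach_discarded_below_threshold:
  assumes "monotone_sf N f" "submodular N f"
  shows "reach f N k eps j A V \<Longrightarrow> discarded_below_threshold f k N A V"
proof (induction rule: reach.induct)
  case (init a)
  then show ?case unfolding discarded_below_threshold_def by simp
next
  case (step j A V vs l)
  have "A \<union> Tpre vs l \<subseteq> N"
    using reach_subset[OF reach.step[OF step.hyps]] by blast
  moreover have "discarded_below_threshold f k N A (filt f k A V)"
    using step.IH by (rule discarded_below_threshold_filt)
  ultimately show ?case
    by (rule discarded_below_threshold_superset[OF assms Un_upper1])
qed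

lemma reach_negative_imp_full:
  assumes "monotone_sf N f" "1 \<le> k"
  shows "reach f N k eps j A V \<Longrightarrow> f A < 0 \<Longrightarrow> V = N"
proof (induction rule: reach.induct)
  case (step j A V vs l)
  have "A \<union> Tpre vs l \<subseteq> N"
    using reach_subset[OF reach.step[OF step.hyps]] by blast
  then have "f A \<le> f (A \<union> Tpre vs l)"
    by (intro monotone_sfD[OF assms(1)]) simp_all
  with step.prems have negative: "f A < 0"
    by linarith
  then have "V = N"
    by (rule step.IH)
  with reach_subset[OF step.hyps(1)] show ?case
    using filt_eq_self_if_negative[OF assms(1) _ _ negative assms(2)] by simp
qed simp

lemma success_final_nonneg:
  assumes "monotone_sf N f" "1 \<le> k" "0 < eps" "success_final f N k eps A V"
  shows "0 \<le> f A"
proof (rule ccontr)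
  assume "\<not> 0 \<le> f A"
  then have negative: "f A < 0"
    by simp
  obtain j V0 where reach: "reach f N k eps j A V0" and "j < ell_par (card N) k eps"
    and V: "V = filt f k A V0" and "card V \<le> k"
    using assms(4) unfolding success_final_def by blast
  have "V0 = N"
    by (rule reach_negative_imp_full[OF assms(1,2) reach negative])
  then have "V = filt f k A N"
    using V by simp
  also have "\<dots> = N"
    using reach_subset[OF reach] filt_eq_self_if_negative[OF assms(1) _ subset_refl negative assms(2)]
    by blast
  finally have "V = N" .
  moreover have "k < card N"
    using \<open>j < ell_par (card N) k eps\<close> by (intro less_if_ell_par_pos[OF _ assms(2,3)]) simp
  ultimately show False
    using \<open>card V \<le> k\<close> by simp
qed

theorem lemma15:
  fixes N :: "'a set" and f :: "'a set \<Rightarrow> real" and k :: nat and eps :: real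
    and Opt A V :: "'a set"
  assumes "finite N"
    and "monotone_sf N f" and "submodular N f"
    and "k \<ge> 1" and "0 < eps" and "eps < 1/2"
    and "Opt \<subseteq> N" and "card Opt = k"
    and "\<forall>S. S \<subseteq> N \<and> card S \<le> k \<longrightarrow> f S \<le> f Opt"
    and "success_final f N k eps A V"
  shows "f (Opt - V) \<le> 2 * f A"
proof -
  obtain j V0 where reach: "reach f N k eps j A V0" and V: "V = filt f k A V0"
    using assms(10) unfolding success_final_def by blast
  have A_subset: "A \<subseteq> N"
    using reach_subset[OF reach] by blast
  have nonneg: "0 \<le> f A"
    using success_final_nonneg[OF assms(2,4,5,10)] .
  have discarded: "discarded_below_threshold f k N A V"
    unfolding V by (intro discarded_below_threshold_filt reach_discarded_below_threshold[OF assms(2,3) reach])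
  have marg_le: "\<forall>x \<in> Opt - V. marg f x A \<le> f A / real k"
    using marg_le_threshold_if_discarded[OF discarded nonneg] assms(7) by blast
  have Opt_V: "finite (Opt - V)" "Opt - V \<subseteq> N"
    using finite_subset[OF assms(7,1)] assms(7) by auto
  have "card (Opt - V) \<le> k"
    using card_mono[OF finite_subset[OF assms(7,1)] Diff_subset] assms(8) by simp
  then show ?thesis
    by (rule le_twice_if_marg_le_threshold[OF assms(2,3) Opt_V A_subset _ nonneg marg_le])
qed

end
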